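(* Let $K\in C^1(\mathbf{R}^d\times\mathbf{R}^d,\mathbf{R}^d)$ satisfy (HK1) and (HK2). Let $F_N^{in}$ be a symmetric Borel probability measure on $(\mathbf{R}^d)^N$ with finite first moment, and let $F_N(t)=T_t\#F_N^{in}$, $t\in\mathbf{R}$, where $T_t$ is the flow of $\dot z_i=\frac1N\sum_{j=1}^NK(z_i,z_j)$, $i=1,\ldots,N$. Then the marginals $F_{N:j}$, $j=1,\ldots,N$, are a weak solution of $$\partial_tF_{N:1}+\tfrac{N-1}{N}\operatorname{div}_{z_1}[K(z_1,z_2)F_{N:2}]_{:1}=0,$$ $$\partial_tF_{N:j}+\tfrac{N-j}{N}\sum_{l=1}^j\operatorname{div}_{z_l}[K(z_l,z_{j+1})F_{N:j+1}]_{:j}+\tfrac1N\sum_{k,l=1}^j\operatorname{div}_{z_l}(K(z_l,z_k)F_{N:j})=0,\quad j=2,\ldots,N-1,$$ $$\partial_tF_{N:N}+\tfrac1N\sum_{k,l=1}^N\operatorname{div}_{z_l}(K(z_l,z_k)F_{N:N})=0,$$ with $F_{N:j}\big|_{t=0}=F^{in}_{N:j}$, $j=1,\ldots,N$. Explicitly, for each $1\le j\le N$ and each $\phi\in C^1_b((\mathbf{R}^d)^j)$, $$\frac{d}{dt}\int\phi\,dF_{N:j}=\frac1N\sum_{k,l=1}^j\int K(z_l,z_k)\cdot\nabla_{z_l}\phi\,dF_{N:j}+\frac{N-j}{N}\sum_{l=1}^j\int K(z_l,z_{j+1})\cdot\nabla_{z_l}\phi(z_1,\ldots,z_j)\,dF_{N:j+1}$$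 (the last sum being absent when $j=N$).
   Context: (HK1): $K(z,z')=-K(z',z)$. (HK2): there is $L\ge0$ with $\sup_{z'}|\nabla_zK|\le L$, $\sup_z|\nabla_{z'}K|\le L$. A probability $P_N$ on $(\mathbf{R}^d)^N$ is symmetric if $S_\sigma\#P_N=P_N$ for all permutations $\sigma$, where $S_\sigma(z_1,\ldots,z_N)=(z_{\sigma(1)},\ldots,z_{\sigma(N)})$. The $k$-particle marginal $P_{N:k}$ is the push-forward of $P_N$ by $(z_1,\ldots,z_N)\mapsto(z_1,\ldots,z_k)$; by convention $P_{N:k}=0$ for $k>N$. $[K(z_l,z_{j+1})F_{N:j+1}]_{:j}$ is the (vector) measure on $(\mathbf{R}^d)^j$ defined by $\langle[K(z_l,z_{j+1})F_{N:j+1}]_{:j},\phi\rangle=\int\phi(z_1,\ldots,z_j)K(z_l,z_{j+1})F_{N:j+1}(dz_1\ldots dz_{j+1})$. *)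

theory Defs
  imports "HOL-Probability.Probability" "HOL-Combinatorics.Permutations"
begin

text \<open>Configurations of n particles in R^d are functions nat => 'a on the index set
  {..<n} (indices 0..n-1 correspond to 1..n in the paper), with the product Borel structure.\<close>

definition cfg_space :: "nat \<Rightarrow> (nat \<Rightarrow> 'a::euclidean_space) measure" where
  "cfg_space n = PiM {..<n} (\<lambda>_. borel)"

definition marg :: "(nat \<Rightarrow> 'a::euclidean_space) measure \<Rightarrow> nat \<Rightarrow> (nat \<Rightarrow> 'a) measure" where
  "marg P k = distr P (cfg_space k) (\<lambda>z. restrict z {..<k})"

definition symmetric_measure :: "nat \<Rightarrow> (nat \<Rightarrow> 'a::euclidean_space) measure \<Rightarrow> bool" where
  "symmetric_measure n P \<longleftrightarrow>
     (\<forall>\<sigma>. \<sigma> permutes {..<n} \<longrightarrow> distr P (cfg_space n) (\<lambda>z. restrict (z \<circ> \<sigma>) {..<n}) = P)"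

text \<open>Directional partial derivative of phi in the variable z_l along v,
  i.e. v . grad_{z_l} phi(z).\<close>
definition pder :: "((nat \<Rightarrow> 'a::euclidean_space) \<Rightarrow> real) \<Rightarrow> (nat \<Rightarrow> 'a) \<Rightarrow> nat \<Rightarrow> 'a \<Rightarrow> real" where
  "pder \<phi> z l v = frechet_derivative (\<lambda>x. \<phi> (z(l := x))) (at (z l)) v"

definition C1b :: "nat \<Rightarrow> ((nat \<Rightarrow> 'a::euclidean_space) \<Rightarrow> real) \<Rightarrow> bool" where
  "C1b k \<phi> \<longleftrightarrow>
     continuous_on (space (cfg_space k)) \<phi> \<and>
     bounded (\<phi> ` space (cfg_space k)) \<and>
     (\<forall>l<k. \<forall>z\<in>space (cfg_space k). (\<lambda>x. \<phi> (z(l := x))) differentiable (at (z l))) \<and>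
     (\<forall>l<k. \<forall>v. continuous_on (space (cfg_space k)) (\<lambda>z. pder \<phi> z l v)) \<and>
     (\<exists>B. \<forall>l<k. \<forall>z\<in>space (cfg_space k). \<forall>v. \<bar>pder \<phi> z l v\<bar> \<le> B * norm v)"

definition C1_kernel :: "('a::euclidean_space \<Rightarrow> 'a \<Rightarrow> 'a) \<Rightarrow> bool" where
  "C1_kernel K \<longleftrightarrow>
     (\<lambda>p. K (fst p) (snd p)) differentiable_on UNIV \<and>
     (\<forall>v. continuous_on UNIV (\<lambda>p. frechet_derivative (\<lambda>q. K (fst q) (snd q)) (at p) v))"

definition is_flow :: "nat \<Rightarrow> ('a::euclidean_space \<Rightarrow> 'a \<Rightarrow> 'a) \<Rightarrow> (real \<Rightarrow> (nat \<Rightarrow> 'a) \<Rightarrow> (nat \<Rightarrow> 'a)) \<Rightarrow> bool" where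
  "is_flow N K T \<longleftrightarrow>
     (\<forall>z\<in>space (cfg_space N).
        T 0 z = z \<and> (\<forall>t. T t z \<in> space (cfg_space N)) \<and>
        (\<forall>i<N. \<forall>t. ((\<lambda>s. T s z i) has_vector_derivative
            ((1 / real N) *\<^sub>R (\<Sum>j<N. K (T t z i) (T t z j)))) (at t)))"

end

theory Submission
  imports Defs
begin

text \<open>Along the flow, the j-particle marginal at time t integrates a test function phi as the
  initial expectation of phi(z_1(t), ..., z_j(t)). Gronwall's inequality for the Lipschitz
  velocity field bounds |z(t)| by exp(2L|t|) times the sum of the |z_i(0)|, so the finite first
  moment dominates the time derivative, which can then be taken under the integral sign: it is
  the expectation of the sum over l of grad_{z_l} phi . (1/N) sum_k K(z_l, z_k). The terms with
  k <= j are integrals against the j-particle marginal. Gronwall also gives uniqueness of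
  trajectories, so the flow commutes with relabelling the particles and the law at time t stays
  symmetric: each of the N - j terms with k > j equals the one with k = j + 1, an integral
  against the (j+1)-particle marginal.\<close>

section \<open>Analytic preliminaries\<close>

lemma tendsto_fun_iff:
  fixes f :: "'b \<Rightarrow> 'i \<Rightarrow> 'a::topological_space"
  shows "(f \<longlongrightarrow> l) F \<longleftrightarrow> (\<forall>i. ((\<lambda>c. f c i) \<longlongrightarrow> l i) F)"
proof -
  have "(f \<longlongrightarrow> l) F \<longleftrightarrow> limitin (product_topology (\<lambda>_. euclidean) UNIV) f l F"
    by (simp add: euclidean_product_topology)
  then show ?thesis
    by (simp add: limitin_componentwise)
qed

lemma tendsto_fun_comparison:
  fixes f g :: "'b \<Rightarrow> 'i \<Rightarrow> 'a::real_normed_vector"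
  assumes "\<And>c i. norm (f c i - l i) \<le> norm (g c i - l i)" and "(g \<longlongrightarrow> l) F"
  shows "(f \<longlongrightarrow> l) F"
  unfolding tendsto_fun_iff
proof
  fix i
  have "\<forall>c. norm (f c i - l i) \<le> norm (g c i - l i)"
    using assms(1) by blast
  moreover have "((\<lambda>c. norm (g c i - l i)) \<longlongrightarrow> 0) F"
    using assms(2) unfolding tendsto_fun_iff by (intro tendsto_norm_zero LIM_zero) blast
  ultimately have "((\<lambda>c. f c i - l i) \<longlongrightarrow> 0) F"
    by (rule Lim_null_comparison[OF always_eventually])
  then show "((\<lambda>c. f c i) \<longlongrightarrow> l i) F"
    by (rule LIM_zero_cancel)
qed

lemma has_real_derivative_norm_power2:
  fixes f :: "real \<Rightarrow> 'a::real_inner"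
  assumes "(f has_vector_derivative f') (at s)"
  shows "((\<lambda>s. (norm (f s))\<^sup>2) has_real_derivative 2 * inner (f s) f') (at s)"
proof -
  have "((\<lambda>s. inner (f s) (f s)) has_derivative
      (\<lambda>h. inner (f s) (h *\<^sub>R f') + inner (h *\<^sub>R f') (f s))) (at s)"
    using assms unfolding has_vector_derivative_def by (intro has_derivative_inner)
  then show ?thesis unfolding has_field_derivative_def power2_norm_eq_inner
    by (rule has_derivative_eq_rhs) (auto simp: inner_commute algebra_simps fun_eq_iff)
qed

lemma has_vector_derivative_imp_tendsto_quotient:
  fixes f :: "real \<Rightarrow> 'a::real_normed_vector"
  assumes "(f has_vector_derivative f') (at t)"
  shows "((\<lambda>s. (f s - f t) /\<^sub>R (s - t)) \<longlongrightarrow> f') (at t)"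
proof -
  have "((\<lambda>s. norm (f s - f t - (s - t) *\<^sub>R f') / norm (s - t)) \<longlongrightarrow> 0) (at t)"
    using assms unfolding has_vector_derivative_def has_derivative_iff_norm by blast
  moreover have "\<forall>\<^sub>F s in at t.
      norm (f s - f t - (s - t) *\<^sub>R f') / norm (s - t) = norm ((f s - f t) /\<^sub>R (s - t) - f')"
  proof (rule eventually_at_filter[THEN iffD2, OF always_eventually], intro allI impI)
    fix s :: real assume "s \<noteq> t"
    then have "(f s - f t) /\<^sub>R (s - t) - f' = (1 / (s - t)) *\<^sub>R (f s - f t - (s - t) *\<^sub>R f')"
      by (simp add: scaleR_diff_right inverse_eq_divide)
    then show "norm (f s - f t - (s - t) *\<^sub>R f') / norm (s - t) = norm ((f s - f t) /\<^sub>R (s - t) - f')"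
      by (simp add: divide_simps)
  qed
  ultimately have "((\<lambda>s. norm ((f s - f t) /\<^sub>R (s - t) - f')) \<longlongrightarrow> 0) (at t)"
    by (rule Lim_transform_eventually)
  then show ?thesis
    by (simp add: tendsto_norm_zero_iff LIM_zero_iff)
qed

lemma gronwall_exp_bound:
  fixes D D' :: "real \<Rightarrow> real"
  assumes deriv: "\<And>s. (D has_real_derivative D' s) (at s)"
    and bound: "\<And>s. \<bar>D' s\<bar> \<le> c * D s"
  shows "D t \<le> D 0 * exp (c * \<bar>t\<bar>)"
proof -
  have forward: "D t \<le> D 0 * exp (c * t)"
    if "0 \<le> t" and "\<And>s. (D has_real_derivative D' s) (at s)" and "\<And>s. D' s \<le> c * D s"
    for D D' :: "real \<Rightarrow> real" and t
  proof -
    define E where "E s = D s * exp (- c * s)" for s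
    have "E t \<le> E 0"
    proof (rule DERIV_nonpos_imp_nonincreasing[OF \<open>0 \<le> t\<close>])
      fix x
      have "(E has_real_derivative (D' x - c * D x) * exp (- c * x)) (at x)"
        unfolding E_def[abs_def] by (auto intro!: derivative_eq_intros that(2) simp: algebra_simps)
      moreover have "(D' x - c * D x) * exp (- c * x) \<le> 0"
        using that(3)[of x] by (simp add: mult_nonpos_nonneg)
      ultimately show "\<exists>y. (E has_real_derivative y) (at x) \<and> y \<le> 0" by blast
    qed
    then show ?thesis by (simp add: E_def exp_minus field_simps)
  qed
  show ?thesis
  proof (cases "0 \<le> t")
    case True
    have "D' s \<le> c * D s" for s
      using bound[of s] by linarith
    with forward[OF True deriv] True show ?thesis by simp
  next
    case False
    have "((\<lambda>s. D (- s)) has_real_derivative - D' (- s)) (at s)" for s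
      using deriv[of "- s"] by (simp add: DERIV_mirror)
    moreover have "- D' (- s) \<le> c * D (- s)" for s
      using bound[of "- s"] by linarith
    ultimately have "D (- (- t)) \<le> D (- 0) * exp (c * - t)"
      using False by (intro forward) auto
    with False show ?thesis by simp
  qed
qed

lemma integral_dominated_convergence_at:
  fixes s :: "real \<Rightarrow> 'a \<Rightarrow> 'b::{banach, second_countable_topology}" and w :: "'a \<Rightarrow> real"
  assumes "f \<in> borel_measurable M" "\<And>r. s r \<in> borel_measurable M" "integrable M w"
    and lim: "AE x in M. ((\<lambda>r. s r x) \<longlongrightarrow> f x) (at t)"
    and bound: "\<forall>\<^sub>F r in at t. AE x in M. norm (s r x) \<le> w x"
  shows "((\<lambda>r. integral\<^sup>L M (s r)) \<longlongrightarrow> integral\<^sup>L M f) (at t)"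
proof (rule tendsto_at_iff_sequentially[THEN iffD2], intro allI impI)
  fix X :: "nat \<Rightarrow> real"
  assume "\<forall>i. X i \<in> UNIV - {t}" "X \<longlonglongrightarrow> t"
  then have X: "filterlim X (at t) sequentially"
    by (intro filterlim_atI) auto
  from filterlim_iff[THEN iffD1, OF X, rule_format, OF bound]
  obtain n0 where w: "\<And>n. n0 \<le> n \<Longrightarrow> AE x in M. norm (s (X n) x) \<le> w x"
    by (auto simp: eventually_sequentially)
  show "((\<lambda>r. integral\<^sup>L M (s r)) \<circ> X) \<longlonglongrightarrow> integral\<^sup>L M f"
    unfolding comp_def
  proof (rule LIMSEQ_offset, rule integral_dominated_convergence)
    show "AE x in M. norm (s (X (n + n0)) x) \<le> w x" for n
      by (rule w) auto
    show "AE x in M. (\<lambda>n. s (X (n + n0)) x) \<longlonglongrightarrow> f x"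
      using lim
    proof eventually_elim
      fix x assume "((\<lambda>r. s r x) \<longlongrightarrow> f x) (at t)"
      then show "(\<lambda>n. s (X (n + n0)) x) \<longlonglongrightarrow> f x"
        by (intro LIMSEQ_ignore_initial_segment filterlim_compose[OF _ X])
    qed
  qed (use assms in auto)
qed

lemma has_real_derivative_integral_dominated:
  fixes F F' :: "real \<Rightarrow> 'b \<Rightarrow> real" and g :: "'b \<Rightarrow> real"
  assumes F_meas: "\<And>s. F s \<in> borel_measurable M"
    and F'_meas: "F' t \<in> borel_measurable M"
    and F_int: "\<And>s. integrable M (F s)"
    and g_int: "integrable M g"
    and deriv: "\<And>x s. x \<in> space M \<Longrightarrow> ((\<lambda>s. F s x) has_real_derivative F' s x) (at s)"
    and dominated: "\<And>x s. x \<in> space M \<Longrightarrow> s \<in> {t-1..t+1} \<Longrightarrow> \<bar>F' s x\<bar> \<le> g x"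
  shows "((\<lambda>s. \<integral>x. F s x \<partial>M) has_real_derivative (\<integral>x. F' t x \<partial>M)) (at t)"
proof -
  define Q where "Q s x = (F s x - F t x) / (s - t)" for s x
  have Q_bound: "\<bar>Q s x\<bar> \<le> g x" if x: "x \<in> space M" and "\<bar>s - t\<bar> < 1" "s \<noteq> t" for s x
  proof -
    have "\<bar>F s x - F t x\<bar> \<le> g x * \<bar>s - t\<bar>"
      using that by (intro field_differentiable_bound[where S = "{t-1..t+1}", simplified])
        (auto intro: has_field_derivative_at_within deriv dominated)
    then show ?thesis
      using \<open>s \<noteq> t\<close> by (simp add: Q_def abs_divide divide_le_eq)
  qed
  have "((\<lambda>s. \<integral>x. Q s x \<partial>M) \<longlongrightarrow> \<integral>x. F' t x \<partial>M) (at t)"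
  proof (rule integral_dominated_convergence_at[where w = g])
    show "AE x in M. ((\<lambda>s. Q s x) \<longlongrightarrow> F' t x) (at t)"
      using deriv by (intro AE_I2) (simp add: Q_def has_field_derivative_iff)
    show "\<forall>\<^sub>F s in at t. AE x in M. norm (Q s x) \<le> g x"
      unfolding eventually_at by (intro exI[of _ 1]) (auto intro!: AE_I2 Q_bound simp: dist_real_def)
    show "Q s \<in> borel_measurable M" for s
      unfolding Q_def[abs_def] using F_meas by measurable
  qed (use F'_meas g_int in auto)
  then show ?thesis
    unfolding has_field_derivative_iff Q_def
    by (simp add: Bochner_Integration.integral_diff[OF F_int F_int] integral_divide_zero)
qed

section \<open>Configurations and test functions\<close>

lemma space_cfg_space: "space (cfg_space n) = PiE {..<n} (\<lambda>_. UNIV)"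
  by (simp add: cfg_space_def space_PiM)

lemma restrict_in_space_cfg_space [simp]: "restrict z {..<n} \<in> space (cfg_space n)"
  by (simp add: space_cfg_space)

lemma cfg_space_eqI:
  assumes "z \<in> space (cfg_space n)" "w \<in> space (cfg_space n)" "\<And>i. i < n \<Longrightarrow> z i = w i"
  shows "z = w"
  using assms by (auto simp: space_cfg_space PiE_iff extensional_def fun_eq_iff) (metis not_less)

lemma cfg_space_undefined:
  "z \<in> space (cfg_space n) \<Longrightarrow> n \<le> i \<Longrightarrow> z i = undefined"
  by (auto simp: space_cfg_space PiE_iff extensional_def)

lemma measurable_ident_cfg_space:
  "(\<lambda>z. z) \<in> borel_measurable (cfg_space n :: (nat \<Rightarrow> 'a::euclidean_space) measure)"
proof (rule measurable_coordinatewise_then_product)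
  fix i :: nat
  show "(\<lambda>z. z i) \<in> borel_measurable (cfg_space n :: (nat \<Rightarrow> 'a) measure)"
  proof (cases "i < n")
    case True
    then show ?thesis unfolding cfg_space_def by (auto intro: measurable_component_singleton)
  next
    case False
    have "(\<lambda>z::nat\<Rightarrow>'a. undefined::'a) \<in> borel_measurable (cfg_space n)" by simp
    then show ?thesis
      by (rule measurable_cong[THEN iffD1, rotated]) (metis False cfg_space_undefined not_less)
  qed
qed

lemma borel_measurable_component_cfg_space:
  "(\<lambda>z. z i) \<in> borel_measurable (cfg_space n :: (nat \<Rightarrow> 'a::euclidean_space) measure)"
  by (rule measurable_product_then_coordinatewise[OF measurable_ident_cfg_space])

lemma borel_measurable_continuous_on_cfg_space:
  fixes g :: "(nat \<Rightarrow> 'a::euclidean_space) \<Rightarrow> 'b::second_countable_topology"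
  assumes "continuous_on (space (cfg_space n)) g"
  shows "g \<in> borel_measurable (cfg_space n)"
proof -
  have "continuous_on UNIV (\<lambda>w::nat\<Rightarrow>'a. restrict w {..<n})"
  proof (intro continuous_on_coordinatewise_then_product)
    fix i show "continuous_on UNIV (\<lambda>w::nat\<Rightarrow>'a. restrict w {..<n} i)"
      by (cases "i < n") auto
  qed
  then have "continuous_on UNIV (\<lambda>w. g (restrict w {..<n}))"
    by (rule continuous_on_compose2[OF assms]) auto
  then have "(\<lambda>w. g (restrict w {..<n})) \<in> borel_measurable (cfg_space n)"
    using measurable_compose[OF measurable_ident_cfg_space borel_measurable_continuous_onI] by blast
  then show ?thesis
    by (rule measurable_cong[THEN iffD1, rotated]) (auto simp: space_cfg_space PiE_restrict)
qed

lemma measurable_restrict_cfg_space: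
  "j \<le> n \<Longrightarrow> (\<lambda>z. restrict z {..<j}) \<in> measurable (cfg_space n) (cfg_space j)"
  unfolding cfg_space_def by (rule measurable_restrict_subset) auto

lemma C1b_has_derivative_pder:
  assumes "C1b j \<phi>" "y \<in> space (cfg_space j)" "l < j"
  shows "((\<lambda>x. \<phi> (y(l := x))) has_derivative pder \<phi> y l) (at (y l))"
proof -
  have "(\<lambda>x. \<phi> (y(l := x))) differentiable (at (y l))"
    using assms unfolding C1b_def by blast
  then show ?thesis unfolding frechet_derivative_works pder_def by (simp add: fun_eq_iff)
qed

lemma C1b_linear_pder:
  "C1b j \<phi> \<Longrightarrow> y \<in> space (cfg_space j) \<Longrightarrow> l < j \<Longrightarrow> linear (pder \<phi> y l)"
  by (rule has_derivative_linear[OF C1b_has_derivative_pder])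

lemma C1b_pder_eq_sum_Basis:
  assumes "C1b j \<phi>" "y \<in> space (cfg_space j)" "l < j"
  shows "pder \<phi> y l v = (\<Sum>b\<in>Basis. (v \<bullet> b) * pder \<phi> y l b)"
proof -
  have "pder \<phi> y l v = pder \<phi> y l (\<Sum>b\<in>Basis. (v \<bullet> b) *\<^sub>R b)"
    by (simp add: euclidean_representation)
  also have "\<dots> = (\<Sum>b\<in>Basis. (v \<bullet> b) * pder \<phi> y l b)"
    using C1b_linear_pder[OF assms] by (simp add: linear_sum linear_cmul o_def)
  finally show ?thesis .
qed

text \<open>C1b only asks for continuity of pder in each fixed direction; expanding the direction in
  the basis gives joint continuity in point and direction.\<close>

lemma C1b_tendsto_pder:
  assumes C: "C1b j \<phi>" and l: "l < j"
    and \<xi>: "(\<xi> \<longlongrightarrow> y) F" and y: "y \<in> space (cfg_space j)"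
    and \<xi>_space: "\<forall>\<^sub>F s in F. \<xi> s \<in> space (cfg_space j)"
    and v: "(v \<longlongrightarrow> v0) F"
  shows "((\<lambda>s. pder \<phi> (\<xi> s) l (v s)) \<longlongrightarrow> pder \<phi> y l v0) F"
proof -
  have "continuous_on (space (cfg_space j)) (\<lambda>z. pder \<phi> z l b)" for b
    using C l unfolding C1b_def by blast
  then have "((\<lambda>s. \<Sum>b\<in>Basis. (v s \<bullet> b) * pder \<phi> (\<xi> s) l b) \<longlongrightarrow> (\<Sum>b\<in>Basis. (v0 \<bullet> b) * pder \<phi> y l b)) F"
    by (intro tendsto_intros v continuous_on_tendsto_compose[OF _ \<xi> y \<xi>_space])
  moreover have "\<forall>\<^sub>F s in F. (\<Sum>b\<in>Basis. (v s \<bullet> b) * pder \<phi> (\<xi> s) l b) = pder \<phi> (\<xi> s) l (v s)"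
    using \<xi>_space by eventually_elim (simp add: C1b_pder_eq_sum_Basis[OF C _ l])
  ultimately show ?thesis
    unfolding C1b_pder_eq_sum_Basis[OF C y l, of v0] by (rule Lim_transform_eventually)
qed

lemma C1b_borel_measurable: "C1b j \<phi> \<Longrightarrow> \<phi> \<in> borel_measurable (cfg_space j)"
  unfolding C1b_def by (intro borel_measurable_continuous_on_cfg_space) blast

lemma borel_measurable_pder:
  assumes C: "C1b j \<phi>" and l: "l < j"
    and w: "w \<in> measurable M (cfg_space j)" and v: "v \<in> borel_measurable M"
  shows "(\<lambda>x. pder \<phi> (w x) l (v x)) \<in> borel_measurable M"
proof -
  have pder_meas: "(\<lambda>z. pder \<phi> z l b) \<in> borel_measurable (cfg_space j)" for b
    using C l unfolding C1b_def by (intro borel_measurable_continuous_on_cfg_space) blast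
  have "(\<lambda>x. \<Sum>b\<in>Basis. (v x \<bullet> b) * pder \<phi> (w x) l b) \<in> borel_measurable M"
    using measurable_compose[OF w pder_meas] v by measurable
  then show ?thesis
    by (rule measurable_cong[THEN iffD1, rotated])
      (simp add: C1b_pder_eq_sum_Basis[OF C measurable_space[OF w] l])
qed

lemma C1b_pder_bound:
  assumes "C1b j \<phi>"
  obtains B where "B \<ge> 0"
    and "\<And>l z v. l < j \<Longrightarrow> z \<in> space (cfg_space j) \<Longrightarrow> \<bar>pder \<phi> z l v\<bar> \<le> B * norm v"
proof -
  obtain B where B: "\<forall>l<j. \<forall>z\<in>space (cfg_space j). \<forall>v. \<bar>pder \<phi> z l v\<bar> \<le> B * norm v"
    using assms unfolding C1b_def by blast
  have "\<bar>pder \<phi> z l v\<bar> \<le> \<bar>B\<bar> * norm v" if "l < j" "z \<in> space (cfg_space j)" for l z v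
    using B that by (meson abs_ge_self mult_right_mono norm_ge_zero order_trans)
  then show ?thesis using that[of "\<bar>B\<bar>"] by auto
qed

lemma C1b_integrable_comp:
  assumes "C1b j \<phi>" "prob_space M" "w \<in> measurable M (cfg_space j)"
  shows "integrable M (\<lambda>x. \<phi> (w x))"
proof -
  interpret prob_space M by fact
  obtain B where "\<forall>y\<in>\<phi> ` space (cfg_space j). norm y \<le> B"
    using assms(1) unfolding C1b_def bounded_iff by blast
  then show ?thesis
    using measurable_space[OF assms(3)]
    by (intro integrable_const_bound[where B=B] AE_I2
        measurable_compose[OF assms(3) C1b_borel_measurable[OF assms(1)]]) auto
qed

lemma C1b_mvt_particle:
  assumes C: "C1b j \<phi>" and y: "y \<in> space (cfg_space j)" and l: "l < j"
  obtains \<tau> where "0 < \<tau>" "\<tau> < 1"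
    and "\<phi> (y(l := x)) - \<phi> y = pder \<phi> (y(l := y l + \<tau> *\<^sub>R (x - y l))) l (x - y l)"
proof -
  let ?D = "x - y l"
  let ?z = "\<lambda>\<tau>. y(l := y l + \<tau> *\<^sub>R ?D)"
  define g where "g \<tau> = \<phi> (?z \<tau>)" for \<tau>
  have g_deriv: "(g has_real_derivative pder \<phi> (?z \<tau>) l ?D) (at \<tau>)" for \<tau>
  proof -
    have z_space: "?z \<tau> \<in> space (cfg_space j)"
      using y l by (auto simp: space_cfg_space PiE_iff extensional_def)
    have "((\<lambda>x. \<phi> (y(l := x))) has_derivative pder \<phi> (?z \<tau>) l) (at (y l + \<tau> *\<^sub>R ?D))"
      using C1b_has_derivative_pder[OF C z_space l] by simp
    moreover have "((\<lambda>\<tau>. y l + \<tau> *\<^sub>R ?D) has_derivative (\<lambda>h. h *\<^sub>R ?D)) (at \<tau>)"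
      by (auto intro!: derivative_eq_intros)
    ultimately have "((\<lambda>x. \<phi> (y(l := x))) \<circ> (\<lambda>\<tau>. y l + \<tau> *\<^sub>R ?D) has_derivative
        pder \<phi> (?z \<tau>) l \<circ> (\<lambda>h. h *\<^sub>R ?D)) (at \<tau>)"
      by (rule diff_chain_at[rotated])
    then have "(g has_derivative pder \<phi> (?z \<tau>) l \<circ> (\<lambda>h. h *\<^sub>R ?D)) (at \<tau>)"
      by (simp add: g_def[abs_def] comp_def)
    moreover have "pder \<phi> (?z \<tau>) l \<circ> (\<lambda>h. h *\<^sub>R ?D) = (\<lambda>h. pder \<phi> (?z \<tau>) l ?D * h)"
      using C1b_linear_pder[OF C z_space l] by (simp add: fun_eq_iff linear_cmul)
    ultimately show ?thesis unfolding has_field_derivative_def by simp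
  qed
  obtain \<tau> where "0 < \<tau>" "\<tau> < 1" "g 1 - g 0 = (1 - 0) * pder \<phi> (?z \<tau>) l ?D"
    using MVT2[of 0 1 g, OF _ g_deriv] by auto
  moreover have "g 0 = \<phi> y" by (simp add: g_def)
  ultimately show ?thesis using that by (simp add: g_def)
qed

text \<open>A mean value theorem that moves the particles from y to y' one at a time.\<close>

lemma C1b_mvt:
  assumes C: "C1b j \<phi>" and y: "y \<in> space (cfg_space j)" and y': "y' \<in> space (cfg_space j)"
  obtains \<xi> where "\<And>l. l < j \<Longrightarrow> \<xi> l \<in> space (cfg_space j)"
    and "\<And>l i. norm (\<xi> l i - y i) \<le> norm (y' i - y i)"
    and "\<phi> y' - \<phi> y = (\<Sum>l<j. pder \<phi> (\<xi> l) l (y' l - y l))"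
proof -
  define H where "H l = (\<lambda>i. if i < l then y' i else y i)" for l
  have H_space: "H l \<in> space (cfg_space j)" for l
    using y y' by (auto simp: H_def space_cfg_space PiE_iff extensional_def)
  have "\<forall>l. \<exists>\<tau>. l < j \<longrightarrow> 0 < \<tau> \<and> \<tau> < 1 \<and>
      \<phi> (H (Suc l)) - \<phi> (H l) = pder \<phi> ((H l)(l := y l + \<tau> *\<^sub>R (y' l - y l))) l (y' l - y l)"
    (is "\<forall>l. \<exists>\<tau>. ?P l \<tau>")
  proof
    fix l
    show "\<exists>\<tau>. ?P l \<tau>"
    proof (cases "l < j")
      case True
      have "H (Suc l) = (H l)(l := y' l)" "H l l = y l"
        by (auto simp: H_def fun_eq_iff)
      with C1b_mvt_particle[OF C H_space True, where x = "y' l"] show ?thesis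
        by metis
    qed simp
  qed
  from choice[OF this] obtain \<tau> where \<tau>: "\<forall>l. l < j \<longrightarrow> 0 < \<tau> l \<and> \<tau> l < 1 \<and>
      \<phi> (H (Suc l)) - \<phi> (H l) = pder \<phi> ((H l)(l := y l + \<tau> l *\<^sub>R (y' l - y l))) l (y' l - y l)"
    by blast
  show ?thesis
  proof
    show "(H l)(l := y l + \<tau> l *\<^sub>R (y' l - y l)) \<in> space (cfg_space j)" if "l < j" for l
      using H_space[of l] that by (auto simp: space_cfg_space PiE_iff extensional_def)
    show "norm (((H l)(l := y l + \<tau> l *\<^sub>R (y' l - y l))) i - y i) \<le> norm (y' i - y i)" for l i
    proof (cases "i = l \<and> l < j")
      case True
      with \<tau> show ?thesis by (auto simp: abs_of_pos intro!: mult_left_le_one_le)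
    next
      case False
      then show ?thesis
        using cfg_space_undefined[OF y, of i] cfg_space_undefined[OF y', of i]
        by (cases "i < l") (auto simp: H_def not_less)
    qed
    have "H j = y'"
      using cfg_space_undefined[OF y] cfg_space_undefined[OF y'] by (auto simp: H_def fun_eq_iff not_less)
    then have "\<phi> y' - \<phi> y = (\<Sum>l<j. \<phi> (H (Suc l)) - \<phi> (H l))"
      by (subst sum_lessThan_telescope) (simp add: H_def)
    also have "\<dots> = (\<Sum>l<j. pder \<phi> ((H l)(l := y l + \<tau> l *\<^sub>R (y' l - y l))) l (y' l - y l))"
      using \<tau> by (intro sum.cong) auto
    finally show "\<phi> y' - \<phi> y = \<dots>" .
  qed
qed

lemma C1b_chain_rule:
  assumes C: "C1b j \<phi>" and \<gamma>_space: "\<And>s. \<gamma> s \<in> space (cfg_space j)"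
    and \<gamma>_deriv: "\<And>l. l < j \<Longrightarrow> ((\<lambda>s. \<gamma> s l) has_vector_derivative \<gamma>' l) (at t)"
  shows "((\<lambda>s. \<phi> (\<gamma> s)) has_real_derivative (\<Sum>l<j. pder \<phi> (\<gamma> t) l (\<gamma>' l))) (at t)"
proof -
  have "\<forall>s. \<exists>\<xi>. (\<forall>l<j. \<xi> l \<in> space (cfg_space j)) \<and> (\<forall>l i. norm (\<xi> l i - \<gamma> t i) \<le> norm (\<gamma> s i - \<gamma> t i)) \<and>
      \<phi> (\<gamma> s) - \<phi> (\<gamma> t) = (\<Sum>l<j. pder \<phi> (\<xi> l) l (\<gamma> s l - \<gamma> t l))"
    by (intro allI, rule C1b_mvt[OF C \<gamma>_space \<gamma>_space]) blast
  from choice[OF this] obtain \<xi> where \<xi>: "\<forall>s. (\<forall>l<j. \<xi> s l \<in> space (cfg_space j)) \<and>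
      (\<forall>l i. norm (\<xi> s l i - \<gamma> t i) \<le> norm (\<gamma> s i - \<gamma> t i)) \<and>
      \<phi> (\<gamma> s) - \<phi> (\<gamma> t) = (\<Sum>l<j. pder \<phi> (\<xi> s l) l (\<gamma> s l - \<gamma> t l))"
    by blast
  then have \<xi>_space: "\<And>s l. l < j \<Longrightarrow> \<xi> s l \<in> space (cfg_space j)"
    and \<xi>_near: "\<And>s l i. norm (\<xi> s l i - \<gamma> t i) \<le> norm (\<gamma> s i - \<gamma> t i)"
    and \<xi>_mvt: "\<And>s. \<phi> (\<gamma> s) - \<phi> (\<gamma> t) = (\<Sum>l<j. pder \<phi> (\<xi> s l) l (\<gamma> s l - \<gamma> t l))"
    by blast+
  have "((\<lambda>s. \<gamma> s i) \<longlongrightarrow> \<gamma> t i) (at t)" for i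
  proof (cases "i < j")
    case True
    then show ?thesis
      using has_vector_derivative_continuous[OF \<gamma>_deriv[OF True]] by (simp add: continuous_within)
  next
    case False
    then have "\<gamma> s i = undefined" for s
      using cfg_space_undefined[OF \<gamma>_space] by simp
    then show ?thesis by simp
  qed
  then have "(\<gamma> \<longlongrightarrow> \<gamma> t) (at t)"
    unfolding tendsto_fun_iff by blast
  then have \<xi>_lim: "((\<lambda>s. \<xi> s l) \<longlongrightarrow> \<gamma> t) (at t)" for l
    by (rule tendsto_fun_comparison[OF \<xi>_near])
  have lim: "((\<lambda>s. \<Sum>l<j. pder \<phi> (\<xi> s l) l ((\<gamma> s l - \<gamma> t l) /\<^sub>R (s - t))) \<longlongrightarrow>
      (\<Sum>l<j. pder \<phi> (\<gamma> t) l (\<gamma>' l))) (at t)"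
    by (intro tendsto_sum C1b_tendsto_pder[OF C] \<xi>_lim \<gamma>_space always_eventually allI \<xi>_space
        has_vector_derivative_imp_tendsto_quotient \<gamma>_deriv) auto
  have quotient: "(\<Sum>l<j. pder \<phi> (\<xi> s l) l ((\<gamma> s l - \<gamma> t l) /\<^sub>R (s - t))) =
      (\<phi> (\<gamma> s) - \<phi> (\<gamma> t)) / (s - t)" for s
    using C1b_linear_pder[OF C \<xi>_space]
    by (simp add: \<xi>_mvt linear_cmul sum_distrib_left divide_inverse_commute)
  show ?thesis
    using lim unfolding quotient has_field_derivative_iff .
qed

section \<open>The particle flow\<close>

locale lipschitz_kernel =
  fixes K :: "'a::euclidean_space \<Rightarrow> 'a \<Rightarrow> 'a" and L :: real
  assumes K_C1: "C1_kernel K"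
    and K_antisym: "\<And>z z'. K z z' = - K z' z"
    and L_nonneg: "L \<ge> 0"
    and HK2a: "\<And>z z' v. norm (frechet_derivative (\<lambda>x. K x z') (at z) v) \<le> L * norm v"
begin

lemma kernel_diag [simp]: "K x x = 0"
proof -
  have "2 *\<^sub>R K x x = 0"
    using K_antisym[of x x] by (simp add: scaleR_2 eq_neg_iff_add_eq_0)
  then show ?thesis by simp
qed

lemma kernel_differentiable: "(\<lambda>p. K (fst p) (snd p)) differentiable (at p)"
  using K_C1 unfolding C1_kernel_def differentiable_on_def by (cases p) auto

lemma continuous_on_kernel: "continuous_on UNIV (\<lambda>p. K (fst p) (snd p))"
  using kernel_differentiable
  by (simp add: continuous_at_imp_continuous_on differentiable_imp_continuous_within)

lemma borel_measurable_kernel: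
  "f \<in> borel_measurable M \<Longrightarrow> g \<in> borel_measurable M \<Longrightarrow> (\<lambda>x. K (f x) (g x)) \<in> borel_measurable M"
  by (rule borel_measurable_continuous_Pair[OF _ _ continuous_on_kernel])

lemma kernel_lipschitz1: "norm (K x y - K x' y) \<le> L * norm (x - x')"
proof (rule differentiable_bound[where S=UNIV and f="\<lambda>x. K x y"
      and f'="\<lambda>x. frechet_derivative (\<lambda>x. K x y) (at x)"])
  fix z :: 'a
  have "(\<lambda>x. K x y) differentiable (at z)"
    using differentiable_chain_at[OF _ kernel_differentiable, of "\<lambda>x. (x, y)"]
    by (simp add: o_def)
  then show "((\<lambda>x. K x y) has_derivative frechet_derivative (\<lambda>x. K x y) (at z)) (at z within UNIV)"
    using frechet_derivative_works by auto
  show "onorm (frechet_derivative (\<lambda>x. K x y) (at z)) \<le> L"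
    by (rule onorm_le) (rule HK2a)
qed auto

lemma kernel_lipschitz2: "norm (K x y - K x y') \<le> L * norm (y - y')"
proof -
  have "K x y - K x y' = K y' x - K y x"
    by (simp add: K_antisym[of x y] K_antisym[of x y'])
  then show ?thesis
    using kernel_lipschitz1[of y' x y] by (simp add: norm_minus_commute)
qed

lemma kernel_lipschitz: "norm (K x y - K x' y') \<le> L * (norm (x - x') + norm (y - y'))"
proof -
  have "norm (K x y - K x' y') \<le> norm (K x y - K x' y) + norm (K x' y - K x' y')"
    using norm_triangle_ineq[of "K x y - K x' y" "K x' y - K x' y'"] by simp
  also have "\<dots> \<le> L * norm (x - x') + L * norm (y - y')"
    by (intro add_mono kernel_lipschitz1 kernel_lipschitz2)
  finally show ?thesis by (simp add: algebra_simps)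
qed

lemma kernel_bound: "norm (K x y) \<le> L * (norm x + norm y)"
  using kernel_lipschitz[of x y 0 0] by simp

end

locale particle_flow = lipschitz_kernel K L
  for K :: "'a::euclidean_space \<Rightarrow> 'a \<Rightarrow> 'a" and L +
  fixes N :: nat and T :: "real \<Rightarrow> (nat \<Rightarrow> 'a) \<Rightarrow> nat \<Rightarrow> 'a"
  assumes flow: "is_flow N K T" and N_pos: "0 < N"
begin

definition velocity :: "(nat \<Rightarrow> 'a) \<Rightarrow> nat \<Rightarrow> 'a" where
  "velocity w i = (1 / real N) *\<^sub>R (\<Sum>j<N. K (w i) (w j))"

definition trajectory :: "(real \<Rightarrow> nat \<Rightarrow> 'a) \<Rightarrow> bool" where
  "trajectory u \<longleftrightarrow> (\<forall>i<N. \<forall>s. ((\<lambda>s. u s i) has_vector_derivative velocity (u s) i) (at s))"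

lemma velocity_lipschitz:
  "norm (velocity w i - velocity z i)
     \<le> L * norm (w i - z i) + (L / real N) * (\<Sum>j<N. norm (w j - z j))"
proof -
  have "norm (velocity w i - velocity z i) = (1 / real N) * norm (\<Sum>j<N. K (w i) (w j) - K (z i) (z j))"
    by (simp add: velocity_def sum_subtractf flip: scaleR_diff_right)
  also have "\<dots> \<le> (1 / real N) * (\<Sum>j<N. L * (norm (w i - z i) + norm (w j - z j)))"
    by (intro mult_left_mono order.trans[OF norm_sum] sum_mono kernel_lipschitz) auto
  also have "\<dots> = L * norm (w i - z i) + (L / real N) * (\<Sum>j<N. norm (w j - z j))"
    using N_pos by (simp add: sum.distrib sum_distrib_left field_simps)
  finally show ?thesis .
qed

lemma inner_velocity_diff_bound:
  "\<bar>\<Sum>i<N. 2 * inner (w i - z i) (velocity w i - velocity z i)\<bar> \<le> 4 * L * (\<Sum>i<N. (norm (w i - z i))\<^sup>2)"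
proof -
  define a where "a i = norm (w i - z i)" for i
  define A where "A = (\<Sum>i<N. a i)"
  have "\<bar>\<Sum>i<N. 2 * inner (w i - z i) (velocity w i - velocity z i)\<bar>
      \<le> (\<Sum>i<N. 2 * (a i * (L * a i + (L / real N) * A)))"
  proof (rule order.trans[OF sum_abs], rule sum_mono)
    fix i
    have "\<bar>2 * inner (w i - z i) (velocity w i - velocity z i)\<bar> \<le> 2 * (a i * norm (velocity w i - velocity z i))"
      unfolding a_def using Cauchy_Schwarz_ineq2 by (simp add: abs_mult)
    also have "\<dots> \<le> 2 * (a i * (L * a i + (L / real N) * A))"
      unfolding A_def a_def by (intro mult_left_mono velocity_lipschitz) auto
    finally show "\<bar>2 * inner (w i - z i) (velocity w i - velocity z i)\<bar> \<le> 2 * (a i * (L * a i + (L / real N) * A))" .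
  qed
  also have "\<dots> = 2 * L * (\<Sum>i<N. (a i)\<^sup>2) + 2 * (L / real N) * A\<^sup>2"
    by (simp add: sum.distrib sum_distrib_left sum_distrib_right sum_divide_distrib A_def
        power2_eq_square algebra_simps)
  also have "\<dots> \<le> 2 * L * (\<Sum>i<N. (a i)\<^sup>2) + 2 * (L / real N) * ((\<Sum>i<N. (a i)\<^sup>2) * real N)"
    using sum_squared_le_sum_of_squares[of a "{..<N}"] L_nonneg unfolding A_def
    by (intro add_left_mono mult_left_mono) auto
  also have "\<dots> = 4 * L * (\<Sum>i<N. (a i)\<^sup>2)"
    using N_pos by (simp add: field_simps)
  finally show ?thesis by (simp add: a_def)
qed

lemma trajectory_distance_growth:
  assumes "trajectory u" "trajectory v"
  shows "L2_set (\<lambda>i. norm (u t i - v t i)) {..<N}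
    \<le> exp (2 * L * \<bar>t\<bar>) * L2_set (\<lambda>i. norm (u 0 i - v 0 i)) {..<N}"
proof -
  define D where "D s = (\<Sum>i<N. (norm (u s i - v s i))\<^sup>2)" for s
  have "(D has_real_derivative
      (\<Sum>i<N. 2 * inner (u s i - v s i) (velocity (u s) i - velocity (v s) i))) (at s)" for s
    unfolding D_def[abs_def] using assms
    by (intro DERIV_sum has_real_derivative_norm_power2 has_vector_derivative_diff)
      (auto simp: trajectory_def)
  then have "D t \<le> D 0 * exp (4 * L * \<bar>t\<bar>)"
    by (rule gronwall_exp_bound) (simp add: D_def inner_velocity_diff_bound)
  also have "exp (4 * L * \<bar>t\<bar>) = (exp (2 * L * \<bar>t\<bar>))\<^sup>2"
    by (simp add: power2_eq_square flip: exp_add)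
  finally have "sqrt (D t) \<le> sqrt (D 0 * (exp (2 * L * \<bar>t\<bar>))\<^sup>2)"
    by (rule real_sqrt_le_mono)
  then show ?thesis
    by (simp add: L2_set_def D_def real_sqrt_mult mult.commute)
qed

lemma flow_0: "z \<in> space (cfg_space N) \<Longrightarrow> T 0 z = z"
  using flow by (auto simp: is_flow_def)

lemma flow_in_space: "z \<in> space (cfg_space N) \<Longrightarrow> T t z \<in> space (cfg_space N)"
  using flow by (auto simp: is_flow_def)

lemma flow_has_vector_derivative:
  "z \<in> space (cfg_space N) \<Longrightarrow> i < N \<Longrightarrow> ((\<lambda>s. T s z i) has_vector_derivative velocity (T t z) i) (at t)"
  using flow by (auto simp: is_flow_def velocity_def)

lemma trajectory_flow: "z \<in> space (cfg_space N) \<Longrightarrow> trajectory (\<lambda>s. T s z)"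
  unfolding trajectory_def using flow_has_vector_derivative by blast

lemma trajectory_eq_flow:
  assumes u: "trajectory u" and u_space: "\<And>s. u s \<in> space (cfg_space N)"
    and z: "z \<in> space (cfg_space N)" and u0: "u 0 = z"
  shows "u t = T t z"
proof (rule cfg_space_eqI[OF u_space flow_in_space[OF z]])
  have "L2_set (\<lambda>i. norm (u t i - T t z i)) {..<N} \<le> 0"
    using trajectory_distance_growth[OF u trajectory_flow[OF z], of t] by (simp add: u0 flow_0[OF z] L2_set_constant)
  then have "L2_set (\<lambda>i. norm (u t i - T t z i)) {..<N} = 0"
    by (simp add: antisym)
  then show "u t i = T t z i" if "i < N" for i
    using that by (simp add: L2_set_eq_0_iff)
qed

lemma velocity_permute:
  assumes p: "p permutes {..<N}" and i: "i < N"
  shows "velocity (restrict (w \<circ> p) {..<N}) i = velocity w (p i)"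
proof -
  have "(\<Sum>j<N. K (w (p i)) (w j)) = (\<Sum>j<N. K (w (p i)) (w (p j)))"
    using sum.permute[OF p, of "\<lambda>j. K (w (p i)) (w j)"] by (simp add: o_def)
  then show ?thesis
    using i by (simp add: velocity_def)
qed

lemma flow_permute:
  assumes p: "p permutes {..<N}" and z: "z \<in> space (cfg_space N)"
  shows "T t (restrict (z \<circ> p) {..<N}) = restrict (T t z \<circ> p) {..<N}"
proof -
  have p_less: "i < N \<Longrightarrow> p i < N" for i
    using permutes_in_image[OF p] by auto
  have "trajectory (\<lambda>s. restrict (T s z \<circ> p) {..<N})"
    unfolding trajectory_def
    using flow_has_vector_derivative[OF z p_less] velocity_permute[OF p] by auto
  then show ?thesis
    by (rule trajectory_eq_flow[symmetric]) (simp_all add: flow_0[OF z])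
qed

lemma flow_zero: "T t (restrict (\<lambda>_. 0) {..<N}) = restrict (\<lambda>_. 0) {..<N}"
  by (rule trajectory_eq_flow[symmetric])
    (auto simp: trajectory_def velocity_def space_cfg_space PiE_iff extensional_def split: if_splits)

lemma flow_lipschitz:
  assumes "z \<in> space (cfg_space N)" "w \<in> space (cfg_space N)" "i < N"
  shows "norm (T t w i - T t z i) \<le> exp (2 * L * \<bar>t\<bar>) * L2_set (\<lambda>k. norm (w k - z k)) {..<N}"
proof -
  have "norm (T t w i - T t z i) \<le> L2_set (\<lambda>k. norm (T t w k - T t z k)) {..<N}"
    using assms(3) by (intro member_le_L2_set) auto
  also have "\<dots> \<le> exp (2 * L * \<bar>t\<bar>) * L2_set (\<lambda>k. norm (w k - z k)) {..<N}"
    using trajectory_distance_growth[OF trajectory_flow trajectory_flow, OF assms(2,1)]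
    by (simp add: flow_0 assms)
  finally show ?thesis .
qed

lemma flow_bound:
  assumes z: "z \<in> space (cfg_space N)" and i: "i < N"
  shows "norm (T t z i) \<le> exp (2 * L * \<bar>t\<bar>) * (\<Sum>k<N. norm (z k))"
proof -
  let ?zero = "restrict (\<lambda>_. 0) {..<N} :: nat \<Rightarrow> 'a"
  have "norm (T t z i) = norm (T t z i - T t ?zero i)"
    using i by (simp add: flow_zero)
  also have "\<dots> \<le> exp (2 * L * \<bar>t\<bar>) * L2_set (\<lambda>k. norm (z k - ?zero k)) {..<N}"
    by (rule flow_lipschitz[OF _ z i]) simp
  also have "\<dots> \<le> exp (2 * L * \<bar>t\<bar>) * (\<Sum>k<N. norm (z k))"
    by (intro mult_left_mono order.trans[OF L2_set_le_sum]) auto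
  finally show ?thesis .
qed

lemma continuous_on_flow: "continuous_on (space (cfg_space N)) (\<lambda>z. T t z i)"
proof (cases "i < N")
  case True
  show ?thesis unfolding continuous_on_def
  proof
    fix x :: "nat \<Rightarrow> 'a" assume x: "x \<in> space (cfg_space N)"
    have "((\<lambda>w. w k) \<longlongrightarrow> x k) (at x within space (cfg_space N))" for k
      using tendsto_ident_at[of x "space (cfg_space N)"] unfolding tendsto_fun_iff by blast
    then have "((\<lambda>w. exp (2 * L * \<bar>t\<bar>) * L2_set (\<lambda>k. norm (w k - x k)) {..<N}) \<longlongrightarrow>
        exp (2 * L * \<bar>t\<bar>) * L2_set (\<lambda>k. norm (x k - x k)) {..<N}) (at x within space (cfg_space N))"
      unfolding L2_set_def by (intro tendsto_intros)
    then have "((\<lambda>w. exp (2 * L * \<bar>t\<bar>) * L2_set (\<lambda>k. norm (w k - x k)) {..<N}) \<longlongrightarrow> 0)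
        (at x within space (cfg_space N))"
      by (simp add: L2_set_def)
    moreover have "\<forall>\<^sub>F w in at x within space (cfg_space N).
        norm (T t w i - T t x i) \<le> exp (2 * L * \<bar>t\<bar>) * L2_set (\<lambda>k. norm (w k - x k)) {..<N}"
      using flow_lipschitz[OF x _ True] by (auto simp: eventually_at_filter intro!: always_eventually)
    ultimately have "((\<lambda>w. T t w i - T t x i) \<longlongrightarrow> 0) (at x within space (cfg_space N))"
      by (rule Lim_null_comparison[rotated])
    then show "((\<lambda>w. T t w i) \<longlongrightarrow> T t x i) (at x within space (cfg_space N))"
      by (rule LIM_zero_cancel)
  qed
next
  case False
  then have "T t z i = undefined" if "z \<in> space (cfg_space N)" for z
    using cfg_space_undefined[OF flow_in_space[OF that]] by simp
  then show ?thesis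
    by (intro continuous_on_eq[OF continuous_on_const]) simp
qed

lemma measurable_flow: "T t \<in> measurable (cfg_space N) (cfg_space N)"
proof -
  have "(\<lambda>z. \<lambda>i\<in>{..<N}. T t z i) \<in> measurable (cfg_space N) (PiM {..<N} (\<lambda>_. borel))"
    by (rule measurable_restrict) (rule borel_measurable_continuous_on_cfg_space[OF continuous_on_flow])
  then have "(\<lambda>z. \<lambda>i\<in>{..<N}. T t z i) \<in> measurable (cfg_space N) (cfg_space N)"
    by (simp add: cfg_space_def)
  then show ?thesis
    by (rule measurable_cong[THEN iffD1, rotated]) (metis PiE_restrict flow_in_space space_cfg_space)
qed

lemma kernel_flow_bound:
  assumes "z \<in> space (cfg_space N)" "a < N" "b < N"
  shows "norm (K (T s z a) (T s z b)) \<le> 2 * L * exp (2 * L * \<bar>s\<bar>) * (\<Sum>k<N. norm (z k))"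
proof -
  have "norm (K (T s z a) (T s z b)) \<le> L * (norm (T s z a) + norm (T s z b))"
    by (rule kernel_bound)
  also have "\<dots> \<le> L * (exp (2 * L * \<bar>s\<bar>) * (\<Sum>k<N. norm (z k)) + exp (2 * L * \<bar>s\<bar>) * (\<Sum>k<N. norm (z k)))"
    by (intro mult_left_mono add_mono flow_bound assms L_nonneg)
  finally show ?thesis by (simp add: algebra_simps)
qed

lemma velocity_flow_bound:
  assumes "z \<in> space (cfg_space N)" "l < N"
  shows "norm (velocity (T s z) l) \<le> 2 * L * exp (2 * L * \<bar>s\<bar>) * (\<Sum>k<N. norm (z k))"
proof -
  have "norm (velocity (T s z) l) = (1 / real N) * norm (\<Sum>k<N. K (T s z l) (T s z k))"
    by (simp add: velocity_def)
  also have "\<dots> \<le> (1 / real N) * (\<Sum>k<N. 2 * L * exp (2 * L * \<bar>s\<bar>) * (\<Sum>k<N. norm (z k)))"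
    by (intro mult_left_mono order.trans[OF norm_sum] sum_mono kernel_flow_bound assms) auto
  also have "\<dots> = 2 * L * exp (2 * L * \<bar>s\<bar>) * (\<Sum>k<N. norm (z k))"
    using N_pos by simp
  finally show ?thesis .
qed

end

section \<open>The BBGKY hierarchy\<close>

locale particle_flow_measure = particle_flow K L N T
  for K :: "'a::euclidean_space \<Rightarrow> 'a \<Rightarrow> 'a" and L N T +
  fixes Fin :: "(nat \<Rightarrow> 'a) measure"
  assumes Fin_sets: "sets Fin = sets (cfg_space N)"
    and Fin_prob: "prob_space Fin"
    and Fin_sym: "symmetric_measure N Fin"
    and Fin_moment: "integrable Fin (\<lambda>z. \<Sum>i<N. norm (z i))"
begin

abbreviation law :: "real \<Rightarrow> (nat \<Rightarrow> 'a) measure" where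
  "law t \<equiv> distr Fin (cfg_space N) (T t)"

lemma space_Fin: "space Fin = space (cfg_space N)"
  by (rule sets_eq_imp_space_eq[OF Fin_sets])

lemma measurable_Fin: "measurable Fin X = measurable (cfg_space N) X"
  by (rule measurable_cong_sets[OF Fin_sets refl])

lemma measurable_flow_Fin: "T t \<in> measurable Fin (cfg_space N)"
  unfolding measurable_Fin by (rule measurable_flow)

lemma borel_measurable_flow_component: "(\<lambda>z. T t z a) \<in> borel_measurable Fin"
  by (rule measurable_compose[OF measurable_flow_Fin borel_measurable_component_cfg_space])

lemma measurable_restrict_flow:
  "j \<le> N \<Longrightarrow> (\<lambda>z. restrict (T t z) {..<j}) \<in> measurable Fin (cfg_space j)"
  by (rule measurable_compose[OF measurable_flow_Fin measurable_restrict_cfg_space])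

lemma law_0: "law 0 = Fin"
proof -
  have "law 0 = distr Fin (cfg_space N) (\<lambda>z. z)"
    by (rule distr_cong) (auto simp: space_Fin flow_0)
  also have "\<dots> = Fin"
    by (rule distr_id2[OF Fin_sets[symmetric]])
  finally show ?thesis .
qed

lemma integral_marg_law:
  fixes g :: "(nat \<Rightarrow> 'a) \<Rightarrow> real"
  assumes g: "g \<in> borel_measurable (cfg_space j)" and j: "j \<le> N"
  shows "(\<integral>z. g z \<partial>marg (law t) j) = (\<integral>z. g (restrict (T t z) {..<j}) \<partial>Fin)"
proof -
  have "(\<integral>z. g z \<partial>marg (law t) j) = (\<integral>z. g (restrict z {..<j}) \<partial>law t)"
    unfolding marg_def
    by (rule integral_distr[OF _ g]) (simp add: measurable_restrict_cfg_space[OF j])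
  also have "\<dots> = (\<integral>z. g (restrict (T t z) {..<j}) \<partial>Fin)"
    by (rule integral_distr[OF measurable_flow_Fin])
      (rule measurable_compose[OF measurable_restrict_cfg_space[OF j] g])
  finally show ?thesis .
qed

lemma integral_flow_permute:
  assumes p: "p permutes {..<N}" and g: "g \<in> borel_measurable (cfg_space N)"
  shows "(\<integral>z. g (restrict (T t z \<circ> p) {..<N}) \<partial>Fin) = (\<integral>z. (g :: _ \<Rightarrow> real) (T t z) \<partial>Fin)"
proof -
  define P where "P z = restrict (z \<circ> p) {..<N}" for z :: "nat \<Rightarrow> 'a"
  have P_meas: "P \<in> measurable (cfg_space N) (cfg_space N)"
  proof -
    have "(\<lambda>z. \<lambda>i\<in>{..<N}. z (p i)) \<in> measurable (cfg_space N) (PiM {..<N} (\<lambda>_. borel))"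
      by (rule measurable_restrict) (rule borel_measurable_component_cfg_space)
    then show ?thesis by (simp add: P_def[abs_def] cfg_space_def o_def)
  qed
  have "(\<integral>z. g (T t z) \<partial>Fin) = (\<integral>z. g (T t z) \<partial>distr Fin (cfg_space N) P)"
    using Fin_sym p unfolding symmetric_measure_def P_def by simp
  also have "\<dots> = (\<integral>z. g (T t (P z)) \<partial>Fin)"
    by (rule integral_distr) (auto simp: measurable_Fin P_meas intro: measurable_compose[OF measurable_flow g])
  also have "\<dots> = (\<integral>z. g (restrict (T t z \<circ> p) {..<N}) \<partial>Fin)"
    by (intro Bochner_Integration.integral_cong) (simp_all add: P_def flow_permute[OF p] space_Fin)
  finally show ?thesis ..
qed

lemma integrable_pder_kernel_flow:
  assumes C: "C1b j \<phi>" and l: "l < j" and j: "j \<le> N" and k: "k < N"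
  shows "integrable Fin (\<lambda>z. pder \<phi> (restrict (T t z) {..<j}) l (K (T t z l) (T t z k)))"
proof -
  obtain B where B0: "B \<ge> 0"
    and B: "\<And>l z v. l < j \<Longrightarrow> z \<in> space (cfg_space j) \<Longrightarrow> \<bar>pder \<phi> z l v\<bar> \<le> B * norm v"
    using C1b_pder_bound[OF C] by blast
  let ?c = "B * (2 * L * exp (2 * L * \<bar>t\<bar>))"
  show ?thesis
  proof (rule Bochner_Integration.integrable_bound[OF integrable_mult_right[OF Fin_moment, of ?c]])
    show "(\<lambda>z. pder \<phi> (restrict (T t z) {..<j}) l (K (T t z l) (T t z k))) \<in> borel_measurable Fin"
      by (intro borel_measurable_pder[OF C l] measurable_restrict_flow j borel_measurable_kernel
          borel_measurable_flow_component)
    show "AE z in Fin. norm (pder \<phi> (restrict (T t z) {..<j}) l (K (T t z l) (T t z k)))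
        \<le> norm (?c * (\<Sum>i<N. norm (z i)))"
    proof (rule AE_I2)
      fix z assume "z \<in> space Fin"
      then have z: "z \<in> space (cfg_space N)" by (simp add: space_Fin)
      have "\<bar>pder \<phi> (restrict (T t z) {..<j}) l (K (T t z l) (T t z k))\<bar> \<le> B * norm (K (T t z l) (T t z k))"
        by (rule B[OF l]) simp
      also have "\<dots> \<le> ?c * (\<Sum>i<N. norm (z i))"
        using l j k B0 kernel_flow_bound[OF z, of l k t] by (simp add: mult_left_mono mult.assoc)
      finally show "norm (pder \<phi> (restrict (T t z) {..<j}) l (K (T t z l) (T t z k)))
          \<le> norm (?c * (\<Sum>i<N. norm (z i)))"
        by simp
    qed
  qed
qed

lemma sum_pder_velocity_flow_bound:
  assumes C: "C1b j \<phi>" and j: "j \<le> N"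
  obtains c where "c \<ge> 0"
    and "\<And>z s. z \<in> space (cfg_space N) \<Longrightarrow>
      \<bar>\<Sum>l<j. pder \<phi> (restrict (T s z) {..<j}) l (velocity (T s z) l)\<bar>
        \<le> c * exp (2 * L * \<bar>s\<bar>) * (\<Sum>i<N. norm (z i))"
proof -
  obtain B where B0: "B \<ge> 0"
    and B: "\<And>l z v. l < j \<Longrightarrow> z \<in> space (cfg_space j) \<Longrightarrow> \<bar>pder \<phi> z l v\<bar> \<le> B * norm v"
    using C1b_pder_bound[OF C] by blast
  have "\<bar>\<Sum>l<j. pder \<phi> (restrict (T s z) {..<j}) l (velocity (T s z) l)\<bar>
      \<le> (real j * B * (2 * L)) * exp (2 * L * \<bar>s\<bar>) * (\<Sum>i<N. norm (z i))"
    if z: "z \<in> space (cfg_space N)" for z s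
  proof -
    have "\<bar>\<Sum>l<j. pder \<phi> (restrict (T s z) {..<j}) l (velocity (T s z) l)\<bar>
        \<le> (\<Sum>l<j. B * (2 * L * exp (2 * L * \<bar>s\<bar>) * (\<Sum>i<N. norm (z i))))"
    proof (rule order.trans[OF sum_abs], rule sum_mono)
      fix l assume "l \<in> {..<j}"
      then have "\<bar>pder \<phi> (restrict (T s z) {..<j}) l (velocity (T s z) l)\<bar> \<le> B * norm (velocity (T s z) l)"
        by (intro B) auto
      also have "\<dots> \<le> B * (2 * L * exp (2 * L * \<bar>s\<bar>) * (\<Sum>i<N. norm (z i)))"
        using \<open>l \<in> {..<j}\<close> j by (intro mult_left_mono velocity_flow_bound z B0) auto
      finally show "\<bar>pder \<phi> (restrict (T s z) {..<j}) l (velocity (T s z) l)\<bar>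
          \<le> B * (2 * L * exp (2 * L * \<bar>s\<bar>) * (\<Sum>i<N. norm (z i)))" .
    qed
    then show ?thesis by (simp add: mult_ac)
  qed
  moreover have "real j * B * (2 * L) \<ge> 0"
    using B0 L_nonneg by simp
  ultimately show ?thesis using that by blast
qed

lemma has_real_derivative_integral_marg_law:
  assumes C: "C1b j \<phi>" and j: "j \<le> N"
  shows "((\<lambda>s. \<integral>z. \<phi> z \<partial>marg (law s) j) has_real_derivative
    (\<integral>z. (\<Sum>l<j. pder \<phi> (restrict (T t z) {..<j}) l (velocity (T t z) l)) \<partial>Fin)) (at t)"
proof -
  obtain c where c0: "c \<ge> 0"
    and c: "\<And>z s. z \<in> space (cfg_space N) \<Longrightarrow>
      \<bar>\<Sum>l<j. pder \<phi> (restrict (T s z) {..<j}) l (velocity (T s z) l)\<bar>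
        \<le> c * exp (2 * L * \<bar>s\<bar>) * (\<Sum>i<N. norm (z i))"
    using sum_pder_velocity_flow_bound[OF C j] by blast
  let ?g = "\<lambda>z. c * exp (2 * L * (\<bar>t\<bar> + 1)) * (\<Sum>i<N. norm (z i))"
  have velocity_meas: "(\<lambda>z. velocity (T s z) l) \<in> borel_measurable Fin" for s l
    unfolding velocity_def
    by (intro borel_measurable_scaleR borel_measurable_const borel_measurable_sum
        borel_measurable_kernel borel_measurable_flow_component)
  have "((\<lambda>s. \<integral>z. \<phi> (restrict (T s z) {..<j}) \<partial>Fin) has_real_derivative
      (\<integral>z. (\<Sum>l<j. pder \<phi> (restrict (T t z) {..<j}) l (velocity (T t z) l)) \<partial>Fin)) (at t)"
  proof (rule has_real_derivative_integral_dominated[where g = ?g])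
    show "(\<lambda>z. \<phi> (restrict (T s z) {..<j})) \<in> borel_measurable Fin" for s
      by (rule measurable_compose[OF measurable_restrict_flow[OF j] C1b_borel_measurable[OF C]])
    show "(\<lambda>z. \<Sum>l<j. pder \<phi> (restrict (T t z) {..<j}) l (velocity (T t z) l)) \<in> borel_measurable Fin"
      by (intro borel_measurable_sum borel_measurable_pder[OF C] measurable_restrict_flow[OF j]
          velocity_meas) auto
    show "integrable Fin (\<lambda>z. \<phi> (restrict (T s z) {..<j}))" for s
      by (rule C1b_integrable_comp[OF C Fin_prob measurable_restrict_flow[OF j]])
    show "integrable Fin ?g"
      by (rule integrable_mult_right[OF Fin_moment])
  next
    fix z s assume "z \<in> space Fin"
    then have z: "z \<in> space (cfg_space N)" by (simp add: space_Fin)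
    show "((\<lambda>s. \<phi> (restrict (T s z) {..<j})) has_real_derivative
        (\<Sum>l<j. pder \<phi> (restrict (T s z) {..<j}) l (velocity (T s z) l))) (at s)"
      by (rule C1b_chain_rule[OF C]) (use j flow_has_vector_derivative[OF z] in auto)
  next
    fix z s assume "z \<in> space Fin" and s: "s \<in> {t - 1..t + 1}"
    then have z: "z \<in> space (cfg_space N)" by (simp add: space_Fin)
    have "exp (2 * L * \<bar>s\<bar>) \<le> exp (2 * L * (\<bar>t\<bar> + 1))"
      using s L_nonneg by (auto intro!: mult_left_mono)
    then have "c * exp (2 * L * \<bar>s\<bar>) * (\<Sum>i<N. norm (z i)) \<le> ?g z"
      using c0 by (intro mult_right_mono mult_left_mono sum_nonneg) auto
    with c[OF z, of s] show "\<bar>\<Sum>l<j. pder \<phi> (restrict (T s z) {..<j}) l (velocity (T s z) l)\<bar> \<le> ?g z"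
      by linarith
  qed
  then show ?thesis
    by (simp add: integral_marg_law[OF C1b_borel_measurable[OF C] j])
qed


lemma integral_pder_velocity:
  assumes C: "C1b j \<phi>" and j: "j \<le> N"
  shows "(\<integral>z. (\<Sum>l<j. pder \<phi> (restrict (T t z) {..<j}) l (velocity (T t z) l)) \<partial>Fin)
    = (1 / real N) * (\<Sum>l<j. \<Sum>k<N.
        \<integral>z. pder \<phi> (restrict (T t z) {..<j}) l (K (T t z l) (T t z k)) \<partial>Fin)"
proof -
  let ?G = "\<lambda>l k z. pder \<phi> (restrict (T t z) {..<j}) l (K (T t z l) (T t z k))"
  have G_int: "integrable Fin (?G l k)" if "l < j" "k < N" for l k
    using integrable_pder_kernel_flow[OF C that(1) j that(2)] .
  have "pder \<phi> (restrict (T t z) {..<j}) l (velocity (T t z) l) = (1 / real N) * (\<Sum>k<N. ?G l k z)"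
    if "l < j" for l z
    using C1b_linear_pder[OF C _ that, of "restrict (T t z) {..<j}"]
    by (simp add: velocity_def linear_cmul linear_sum o_def sum_divide_distrib)
  then have "(\<integral>z. (\<Sum>l<j. pder \<phi> (restrict (T t z) {..<j}) l (velocity (T t z) l)) \<partial>Fin)
      = (\<integral>z. (\<Sum>l<j. (1 / real N) * (\<Sum>k<N. ?G l k z)) \<partial>Fin)"
    by (intro Bochner_Integration.integral_cong sum.cong) auto
  also have "\<dots> = (\<Sum>l<j. \<integral>z. (1 / real N) * (\<Sum>k<N. ?G l k z) \<partial>Fin)"
    using G_int by (intro Bochner_Integration.integral_sum integrable_mult_right integrable_sum) auto
  also have "\<dots> = (\<Sum>l<j. (1 / real N) * (\<Sum>k<N. \<integral>z. ?G l k z \<partial>Fin))"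
  proof (rule sum.cong[OF refl])
    fix l assume "l \<in> {..<j}"
    then show "(\<integral>z. (1 / real N) * (\<Sum>k<N. ?G l k z) \<partial>Fin) = (1 / real N) * (\<Sum>k<N. \<integral>z. ?G l k z \<partial>Fin)"
      using G_int by (simp add: Bochner_Integration.integral_sum)
  qed
  finally show ?thesis
    by (simp add: sum_distrib_left)
qed

lemma integral_pder_kernel_inner:
  assumes C: "C1b j \<phi>" and j: "j \<le> N" and l: "l < j" and k: "k < j"
  shows "(\<integral>z. pder \<phi> (restrict (T t z) {..<j}) l (K (T t z l) (T t z k)) \<partial>Fin)
    = (\<integral>z. pder \<phi> z l (K (z l) (z k)) \<partial>marg (law t) j)"
proof -
  have "(\<lambda>z. pder \<phi> z l (K (z l) (z k))) \<in> borel_measurable (cfg_space j)"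
    by (intro borel_measurable_pder[OF C l] measurable_ident_sets borel_measurable_kernel
        borel_measurable_component_cfg_space) simp
  then show ?thesis
    using l k by (simp add: integral_marg_law[OF _ j])
qed

text \<open>By exchangeability, every particle outside the marginal interacts like particle j, the
  first one outside.\<close>

lemma integral_pder_kernel_outer:
  assumes C: "C1b j \<phi>" and l: "l < j" and jk: "j \<le> k" "k < N"
  shows "(\<integral>z. pder \<phi> (restrict (T t z) {..<j}) l (K (T t z l) (T t z k)) \<partial>Fin)
    = (\<integral>z. pder \<phi> (restrict z {..<j}) l (K (z l) (z j)) \<partial>marg (law t) (j + 1))"
proof -
  define p where "p = Transposition.transpose j k"
  have p: "p permutes {..<N}"
    unfolding p_def using jk by (intro permutes_swap_id) auto
  have p_fix: "i < j \<Longrightarrow> p i = i" for i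
    using jk by (auto simp: p_def Transposition.transpose_def)
  have restrict_p: "restrict (w \<circ> p) ({..<N} \<inter> {..<j}) = restrict w {..<j}" for w :: "nat \<Rightarrow> 'a"
    using jk p_fix by (auto simp: fun_eq_iff)
  have p_j: "p j = k"
    by (simp add: p_def)
  define g where "g w = pder \<phi> (restrict w {..<j}) l (K (w l) (w j))" for w :: "nat \<Rightarrow> 'a"
  have g_meas: "g \<in> borel_measurable (cfg_space n)" if "j \<le> n" for n
    unfolding g_def[abs_def]
    by (intro borel_measurable_pder[OF C l] measurable_restrict_cfg_space that
        borel_measurable_kernel borel_measurable_component_cfg_space)
  have "(\<integral>z. pder \<phi> (restrict (T t z) {..<j}) l (K (T t z l) (T t z k)) \<partial>Fin)
      = (\<integral>z. g (restrict (T t z \<circ> p) {..<N}) \<partial>Fin)"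
    using l jk by (intro Bochner_Integration.integral_cong) (simp_all add: g_def restrict_p p_fix p_j)
  also have "\<dots> = (\<integral>z. g (T t z) \<partial>Fin)"
    using jk by (intro integral_flow_permute[OF p g_meas]) simp
  also have "\<dots> = (\<integral>z. g (restrict (T t z) {..<j + 1}) \<partial>Fin)"
    using l by (intro Bochner_Integration.integral_cong) (simp_all add: g_def Int_absorb1)
  also have "\<dots> = (\<integral>z. g z \<partial>marg (law t) (j + 1))"
    using jk by (intro integral_marg_law[symmetric] g_meas) auto
  finally show ?thesis by (simp add: g_def)
qed

lemma integral_pder_velocity_hierarchy:
  assumes C: "C1b j \<phi>" and j: "j \<le> N"
  shows "(\<integral>z. (\<Sum>l<j. pder \<phi> (restrict (T t z) {..<j}) l (velocity (T t z) l)) \<partial>Fin)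
    = (1 / real N) * (\<Sum>k<j. \<Sum>l<j. \<integral>z. pder \<phi> z l (K (z l) (z k)) \<partial>marg (law t) j)
      + (real (N - j) / real N) * (\<Sum>l<j.
          \<integral>z. pder \<phi> (restrict z {..<j}) l (K (z l) (z j)) \<partial>marg (law t) (j + 1))"
proof -
  define A where "A k l = (\<integral>z. pder \<phi> z l (K (z l) (z k)) \<partial>marg (law t) j)" for k l
  define B where "B l = (\<integral>z. pder \<phi> (restrict z {..<j}) l (K (z l) (z j)) \<partial>marg (law t) (j + 1))" for l
  have "(\<Sum>k<N. \<integral>z. pder \<phi> (restrict (T t z) {..<j}) l (K (T t z l) (T t z k)) \<partial>Fin)
      = (\<Sum>k<j. A k l) + real (N - j) * B l" if l: "l < j" for l
  proof -
    let ?G = "\<lambda>k. \<integral>z. pder \<phi> (restrict (T t z) {..<j}) l (K (T t z l) (T t z k)) \<partial>Fin"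
    have "{..<N} = {..<j} \<union> {j..<N}" using j by auto
    then have "sum ?G {..<N} = sum ?G ({..<j} \<union> {j..<N})" by simp
    also have "\<dots> = sum ?G {..<j} + sum ?G {j..<N}"
      by (rule sum.union_disjoint) auto
    also have "sum ?G {..<j} = (\<Sum>k<j. A k l)"
      by (intro sum.cong) (simp_all add: integral_pder_kernel_inner[OF C j l] A_def)
    also have "sum ?G {j..<N} = (\<Sum>k\<in>{j..<N}. B l)"
      by (intro sum.cong) (simp_all add: integral_pder_kernel_outer[OF C l] B_def)
    finally show ?thesis
      by (simp only: sum_constant card_atLeastLessThan)
  qed
  then have "(\<integral>z. (\<Sum>l<j. pder \<phi> (restrict (T t z) {..<j}) l (velocity (T t z) l)) \<partial>Fin)
      = (1 / real N) * (\<Sum>l<j. (\<Sum>k<j. A k l) + real (N - j) * B l)"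
    by (simp add: integral_pder_velocity[OF C j])
  also have "\<dots> = (1 / real N) * (\<Sum>k<j. \<Sum>l<j. A k l) + (real (N - j) / real N) * (\<Sum>l<j. B l)"
    by (simp add: sum.distrib sum.swap[of A] sum_distrib_left sum_distrib_right sum_divide_distrib algebra_simps)
  finally show ?thesis
    unfolding A_def B_def .
qed

lemma weak_bbgky_hierarchy:
  assumes "C1b j \<phi>" "j \<le> N"
  shows "((\<lambda>s. \<integral>z. \<phi> z \<partial>marg (law s) j) has_real_derivative
      ((1 / real N) * (\<Sum>k<j. \<Sum>l<j. \<integral>z. pder \<phi> z l (K (z l) (z k)) \<partial>marg (law t) j)
       + (if j < N then
           (real (N - j) / real N) * (\<Sum>l<j.
             \<integral>z. pder \<phi> (restrict z {..<j}) l (K (z l) (z j)) \<partial>marg (law t) (j + 1))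
          else 0))) (at t)"
  \<comment> \<open>for j = N the factor N - j vanishes\<close>
  using has_real_derivative_integral_marg_law[OF assms, of t] assms(2)
  unfolding integral_pder_velocity_hierarchy[OF assms]
  by (cases "j < N") simp_all

end

theorem mainTheorem7:
  fixes K :: "'a::euclidean_space \<Rightarrow> 'a \<Rightarrow> 'a"
    and N :: nat and L :: real
    and Fin :: "(nat \<Rightarrow> 'a) measure"
    and T :: "real \<Rightarrow> (nat \<Rightarrow> 'a) \<Rightarrow> (nat \<Rightarrow> 'a)"
  assumes K_C1: "C1_kernel K"
    and HK1: "\<And>z z'. K z z' = - K z' z"
    and L_nonneg: "L \<ge> 0"
    and HK2a: "\<And>z z' v. norm (frechet_derivative (\<lambda>x. K x z') (at z) v) \<le> L * norm v"
    and HK2b: "\<And>z z' v. norm (frechet_derivative (\<lambda>y. K z y) (at z') v) \<le> L * norm v"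
    and Fin_sets: "sets Fin = sets (cfg_space N)"
    and Fin_prob: "prob_space Fin"
    and Fin_sym: "symmetric_measure N Fin"
    and Fin_moment: "integrable Fin (\<lambda>z. \<Sum>i<N. norm (z i))"
    and flow: "is_flow N K T"
  shows "\<forall>j. 1 \<le> j \<and> j \<le> N \<longrightarrow>
     marg (distr Fin (cfg_space N) (T 0)) j = marg Fin j \<and>
     (\<forall>\<phi>. C1b j \<phi> \<longrightarrow>
       (\<forall>t. ((\<lambda>s. \<integral>z. \<phi> z \<partial>(marg (distr Fin (cfg_space N) (T s)) j))
          has_real_derivative
            ((1 / real N) * (\<Sum>k<j. \<Sum>l<j.
                \<integral>z. pder \<phi> z l (K (z l) (z k)) \<partial>(marg (distr Fin (cfg_space N) (T t)) j))
             + (if j < N then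
                 (real (N - j) / real N) * (\<Sum>l<j.
                   \<integral>z. pder \<phi> (restrict z {..<j}) l (K (z l) (z j))
                     \<partial>(marg (distr Fin (cfg_space N) (T t)) (j + 1)))
                else 0)))
          (at t)))"
proof (cases "N = 0")
  case False
  interpret particle_flow_measure K L N T Fin
    by (intro particle_flow_measure.intro particle_flow.intro lipschitz_kernel.intro
        particle_flow_axioms.intro particle_flow_measure_axioms.intro; (rule assms)?)
      (use False in simp)
  show ?thesis
    using weak_bbgky_hierarchy by (simp only: law_0 simp_thms) blast
qed simp

end
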